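(* Let $f_1,\dots,f_M:\mathbb{R}\to[0,1]$ be continuous strictly increasing cumulative distribution functions, $w_i>0$ with $\sum_{i=1}^M w_i=1$, and $F(x)=\sum_{i=1}^M w_i f_i(x)$. Let $\overline{w}_i=1-w_i$. Then for $p\in(0,1)$, \[\max_{i:\ p-\overline{w}_i\ge 0} f_i^{-1}(p-\overline{w}_i)\le F^{-1}(p)\le \min_{i:\ p+\overline{w}_i\le 1} f_i^{-1}(p+\overline{w}_i).\]
   Context: For a continuous strictly increasing cdf $G$, $G^{-1}(q)$ denotes the $q$-quantile of $G$, i.e. the $x$ with $G(x)=q$ (with $G^{-1}(0)=-\infty$, $G^{-1}(1)=+\infty$ where applicable). *)

theory Defs
  imports "HOL-Analysis.Analysis"
begin

definition cont_strict_cdf :: "(real \<Rightarrow> real) \<Rightarrow> bool" where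
  "cont_strict_cdf G \<longleftrightarrow>
     (\<forall>x. 0 \<le> G x \<and> G x \<le> 1) \<and> continuous_on UNIV G \<and> strict_mono G \<and>
     (G \<longlongrightarrow> 0) at_bot \<and> (G \<longlongrightarrow> 1) at_top"

definition quantile :: "(real \<Rightarrow> real) \<Rightarrow> real \<Rightarrow> ereal" where
  "quantile G q = (if q \<le> 0 then -\<infinity> else if 1 \<le> q then \<infinity> else ereal (THE x. G x = q))"

end

theory Submission
  imports Defs
begin

text \<open>Since the weights sum to 1, F - f i is the weighted sum of the differences f j - f i;
  the terms with j \<noteq> i lie in [-1, 1] and carry total weight 1 - w i, so f i is uniformly within
  1 - w i of F. A continuous strictly increasing cdf that is uniformly within c of another has
  its q-quantile between the other's (q - c)- and (q + c)-quantiles.\<close>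

lemma cont_strict_cdf_attains:
  assumes G: "cont_strict_cdf G" and q: "0 < q" "q < 1"
  obtains x where "G x = q"
proof -
  have cont: "continuous_on UNIV G" and mono: "strict_mono G"
    and lim0: "(G \<longlongrightarrow> 0) at_bot" and lim1: "(G \<longlongrightarrow> 1) at_top"
    using G unfolding cont_strict_cdf_def by auto
  obtain a where a: "G a < q"
    using order_tendstoD(2)[OF lim0 q(1)] by (auto simp: eventually_at_bot_linorder)
  obtain b where b: "q < G b"
    using order_tendstoD(1)[OF lim1 q(2)] by (auto simp: eventually_at_top_linorder)
  have "G a < G b" using a b by linarith
  then have "a \<le> b" using mono by (simp add: strict_mono_less)
  moreover have "\<forall>x. a \<le> x \<and> x \<le> b \<longrightarrow> isCont G x"
    using cont by (simp add: continuous_on_eq_continuous_at)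
  ultimately show thesis using IVT[of G a q b] a b that by auto
qed

lemma quantile_eq_ereal:
  assumes G: "cont_strict_cdf G" and Gx: "G x = q" and q: "0 < q" "q < 1"
  shows "quantile G q = ereal x"
proof -
  have "inj G" using G strict_mono_imp_inj_on unfolding cont_strict_cdf_def by blast
  then have "(THE x. G x = q) = x" using Gx by (auto dest: injD)
  then show ?thesis using q by (simp add: quantile_def)
qed

lemma quantile_shift_le:
  assumes G: "cont_strict_cdf G" and H: "cont_strict_cdf H"
    and close: "\<And>x. H x \<le> G x + c" and "0 \<le> c"
  shows "quantile G (q - c) \<le> quantile H q"
proof (cases "q - c \<le> 0 \<or> 1 \<le> q")
  case True
  then show ?thesis by (auto simp: quantile_def)
next
  case False
  then have q: "0 < q - c" "q - c < 1" "0 < q" "q < 1" using \<open>0 \<le> c\<close> by auto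
  obtain x where x: "G x = q - c" using cont_strict_cdf_attains[OF G q(1,2)] .
  obtain y where y: "H y = q" using cont_strict_cdf_attains[OF H q(3,4)] .
  have "H x \<le> H y" using close[of x] x y by simp
  then have "x \<le> y" using H unfolding cont_strict_cdf_def by (simp add: strict_mono_less_eq)
  then show ?thesis
    using quantile_eq_ereal[OF G x q(1,2)] quantile_eq_ereal[OF H y q(3,4)] by simp
qed

lemma quantile_bounds_of_sup_dist:
  assumes G: "cont_strict_cdf G" and H: "cont_strict_cdf H"
    and dist: "\<And>x. \<bar>H x - G x\<bar> \<le> c"
  shows "quantile G (q - c) \<le> quantile H q" and "quantile H q \<le> quantile G (q + c)"
proof -
  have "0 \<le> c" using dist[of 0] by linarith
  moreover have "H x \<le> G x + c" "G x \<le> H x + c" for x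
    using dist[of x] by linarith+
  ultimately show "quantile G (q - c) \<le> quantile H q" "quantile H q \<le> quantile G (q + c)"
    using quantile_shift_le[OF G H, of c q] quantile_shift_le[OF H G, of c "q + c"] by simp_all
qed

lemma cont_strict_cdf_mixture:
  assumes "finite I" "I \<noteq> {}"
    and cdf: "\<And>i. i \<in> I \<Longrightarrow> cont_strict_cdf (f i)"
    and wpos: "\<And>i. i \<in> I \<Longrightarrow> w i > 0" and wsum: "(\<Sum>i\<in>I. w i) = 1"
  shows "cont_strict_cdf (\<lambda>x. \<Sum>i\<in>I. w i * f i x)"
  unfolding cont_strict_cdf_def
proof (intro conjI allI)
  have bounds: "0 \<le> f i x" "f i x \<le> 1" if "i \<in> I" for i x
    using cdf[OF that] unfolding cont_strict_cdf_def by auto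
  fix x
  show "0 \<le> (\<Sum>i\<in>I. w i * f i x)"
    using bounds wpos by (intro sum_nonneg) (simp add: less_imp_le)
  have "(\<Sum>i\<in>I. w i * f i x) \<le> (\<Sum>i\<in>I. w i)"
    using bounds wpos by (intro sum_mono) (simp add: mult_left_le less_imp_le)
  then show "(\<Sum>i\<in>I. w i * f i x) \<le> 1" using wsum by simp
next
  show "continuous_on UNIV (\<lambda>x. \<Sum>i\<in>I. w i * f i x)"
    using cdf unfolding cont_strict_cdf_def by (intro continuous_intros) auto
next
  show "strict_mono (\<lambda>x. \<Sum>i\<in>I. w i * f i x)"
  proof (rule strict_monoI)
    fix x y :: real assume "x < y"
    then have "f i x < f i y" if "i \<in> I" for i
      using cdf[OF that] unfolding cont_strict_cdf_def by (simp add: strict_monoD)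
    then show "(\<Sum>i\<in>I. w i * f i x) < (\<Sum>i\<in>I. w i * f i y)"
      using assms(1,2) wpos by (intro sum_strict_mono) auto
  qed
next
  have "((\<lambda>x. \<Sum>i\<in>I. w i * f i x) \<longlongrightarrow> (\<Sum>i\<in>I. w i * 0)) at_bot"
    using cdf unfolding cont_strict_cdf_def by (intro tendsto_intros) auto
  then show "((\<lambda>x. \<Sum>i\<in>I. w i * f i x) \<longlongrightarrow> 0) at_bot" by simp
next
  have "((\<lambda>x. \<Sum>i\<in>I. w i * f i x) \<longlongrightarrow> (\<Sum>i\<in>I. w i * 1)) at_top"
    using cdf unfolding cont_strict_cdf_def by (intro tendsto_intros) auto
  then show "((\<lambda>x. \<Sum>i\<in>I. w i * f i x) \<longlongrightarrow> 1) at_top" using wsum by simp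
qed

lemma mixture_component_dist:
  fixes a :: "'i \<Rightarrow> real"
  assumes "finite I" "k \<in> I"
    and a: "\<And>i. i \<in> I \<Longrightarrow> 0 \<le> a i \<and> a i \<le> 1"
    and wnn: "\<And>i. i \<in> I \<Longrightarrow> 0 \<le> w i" and wsum: "(\<Sum>i\<in>I. w i) = 1"
  shows "\<bar>(\<Sum>i\<in>I. w i * a i) - a k\<bar> \<le> 1 - w k"
proof -
  have "(\<Sum>i\<in>I. w i * a i) - a k = (\<Sum>i\<in>I. w i * (a i - a k))"
    using wsum by (simp add: right_diff_distrib sum_subtractf flip: sum_distrib_right)
  also have "\<dots> = (\<Sum>i\<in>I - {k}. w i * (a i - a k))"
    using assms(1,2) by (simp add: sum.remove)
  finally have "\<bar>(\<Sum>i\<in>I. w i * a i) - a k\<bar> \<le> (\<Sum>i\<in>I - {k}. \<bar>w i * (a i - a k)\<bar>)"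
    by simp
  also have "\<dots> \<le> (\<Sum>i\<in>I - {k}. w i)"
  proof (rule sum_mono)
    fix i assume "i \<in> I - {k}"
    then have "\<bar>a i - a k\<bar> \<le> 1" "0 \<le> w i" using a[of i] a[OF \<open>k \<in> I\<close>] wnn[of i] by auto
    then show "\<bar>w i * (a i - a k)\<bar> \<le> w i"
      by (simp add: abs_mult mult_left_le)
  qed
  also have "\<dots> = 1 - w k" using assms(1,2) wsum by (simp add: sum_diff1)
  finally show ?thesis .
qed

theorem proposition5:
  fixes M :: nat and f :: "nat \<Rightarrow> real \<Rightarrow> real" and w :: "nat \<Rightarrow> real"
    and F :: "real \<Rightarrow> real" and p :: real
  assumes cdf: "\<And>i. i \<in> {1..M} \<Longrightarrow> cont_strict_cdf (f i)"
    and wpos: "\<And>i. i \<in> {1..M} \<Longrightarrow> w i > 0"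
    and wsum: "(\<Sum>i=1..M. w i) = 1"
    and F_def: "F = (\<lambda>x. \<Sum>i=1..M. w i * f i x)"
    and p: "0 < p" "p < 1"
  shows "(SUP i\<in>{i\<in>{1..M}. p - (1 - w i) \<ge> 0}. quantile (f i) (p - (1 - w i))) \<le> quantile F p
       \<and> quantile F p \<le> (INF i\<in>{i\<in>{1..M}. p + (1 - w i) \<le> 1}. quantile (f i) (p + (1 - w i)))"
proof -
  have "M \<ge> 1" using wsum by (cases M) auto
  then have F: "cont_strict_cdf F"
    unfolding F_def by (intro cont_strict_cdf_mixture cdf wpos wsum) auto
  have close: "\<bar>F x - f i x\<bar> \<le> 1 - w i" if i: "i \<in> {1..M}" for i x
    unfolding F_def
  proof (rule mixture_component_dist[OF _ i _ _ wsum])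
    show "0 \<le> f j x \<and> f j x \<le> 1" if "j \<in> {1..M}" for j
      using cdf[OF that] unfolding cont_strict_cdf_def by blast
  qed (use wpos less_imp_le in auto)
  have "quantile (f i) (p - (1 - w i)) \<le> quantile F p"
    and "quantile F p \<le> quantile (f i) (p + (1 - w i))" if i: "i \<in> {1..M}" for i
    by (rule quantile_bounds_of_sup_dist[OF cdf[OF i] F close[OF i]])+
  then show ?thesis
    by (auto intro!: SUP_least INF_greatest)
qed

end
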